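(* Let $a_1\in\mathbb C$, $a_2\in\mathbb R$ and $\theta\in[0,2\pi)$ satisfy $2|a_1|+|a_2|<\frac{1}{4(1+\varepsilon)^3}$. Then the map $f:\Delta\to\mathbb C^2$, $f(\zeta)=\big(e^{i\theta}\zeta,\ e^{2i\theta}\zeta(a_1+a_2\zeta+\overline{a_1}\zeta^2)\big)$, satisfies $f(\Delta)\subset\Omega$, and $f$ is both a complex geodesic and an infinitesimal complex geodesic of $\Omega$.
   Context: $\Delta$ denotes the unit disc in $\mathbb C$ and $\Delta_r$ the disc of radius $r$ centered at $0$. Fix $0<\varepsilon<\frac{1}{100}$. Let $\rho(z,w)=|z|^2+|w|^2-\operatorname{Re}(\bar z^4w^2)-1$ on $\mathbb C^2$, and $\Omega=\{\rho<0\}\cap\big(\Delta_{1+\varepsilon}\times\Delta_{\frac{1}{4(1+\varepsilon)^3}}\big)$. $K_\Omega$ and $d_\Omega$ denote the Kobayashi pseudometric and pseudodistance. A holomorphic map $f:\Delta\to\Omega$ is a complex geodesic if $d_\Omega(f(\zeta),f(\zeta'))=d_\Delta(\zeta,\zeta')$ for all $\zeta,\zeta'\in\Delta$, and an infinitesimal complex geodesic if $K_\Omega(f(\zeta),d_\zeta f(v_0))=K_\Delta(\zeta,v_0)$ for all $\zeta\in\Delta$, $v_0\in\mathbb C$. *)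

theory Defs
  imports "HOL-Analysis.Analysis"
begin

definition unit_disc :: "complex set" where
  "unit_disc = ball 0 1"

definition rho_fun :: "complex \<times> complex \<Rightarrow> real" where
  "rho_fun p = (let z = fst p; w = snd p in
      (cmod z)^2 + (cmod w)^2 - Re ((cnj z)^4 * w^2) - 1)"

definition Omega :: "real \<Rightarrow> (complex \<times> complex) set" where
  "Omega eps = {p. rho_fun p < 0 \<and> cmod (fst p) < 1 + eps
                   \<and> cmod (snd p) < 1 / (4 * (1 + eps)^3)}"

definition hol_disc_map :: "(complex \<times> complex) set \<Rightarrow> (complex \<Rightarrow> complex \<times> complex) \<Rightarrow> bool" where
  "hol_disc_map D f \<longleftrightarrow> (\<lambda>z. fst (f z)) holomorphic_on unit_disc
      \<and> (\<lambda>z. snd (f z)) holomorphic_on unit_disc \<and> f ` unit_disc \<subseteq> D"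

definition deriv2 :: "(complex \<Rightarrow> complex \<times> complex) \<Rightarrow> complex \<Rightarrow> complex \<times> complex" where
  "deriv2 f z = (deriv (\<lambda>t. fst (f t)) z, deriv (\<lambda>t. snd (f t)) z)"

definition poincare_dist :: "complex \<Rightarrow> complex \<Rightarrow> real" where
  "poincare_dist a b = artanh (cmod (a - b) / cmod (1 - cnj a * b))"

definition poincare_metric :: "complex \<Rightarrow> complex \<Rightarrow> real" where
  "poincare_metric z v = cmod v / (1 - (cmod z)^2)"

definition kobayashi_metric :: "(complex \<times> complex) set \<Rightarrow> complex \<times> complex \<Rightarrow> complex \<times> complex \<Rightarrow> real" where
  "kobayashi_metric D p v = Inf {cmod \<alpha> | \<alpha> f. hol_disc_map D f \<and> f 0 = p
       \<and> (\<alpha> * fst (deriv2 f 0), \<alpha> * snd (deriv2 f 0)) = v}"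

text \<open>Kobayashi pseudodistance: infimum over holomorphic chains of the sum of Poincare
  distances (Kobayashi's original definition).\<close>
definition kobayashi_dist :: "(complex \<times> complex) set \<Rightarrow> complex \<times> complex \<Rightarrow> complex \<times> complex \<Rightarrow> real" where
  "kobayashi_dist D p q = Inf {(\<Sum>j<n. poincare_dist (a j) (b j)) | (n::nat) (a::nat \<Rightarrow> complex) (b::nat \<Rightarrow> complex) (f::nat \<Rightarrow> complex \<Rightarrow> complex \<times> complex).
       n \<ge> 1 \<and> (\<forall>j<n. hol_disc_map D (f j) \<and> a j \<in> unit_disc \<and> b j \<in> unit_disc)
       \<and> f 0 (a 0) = p \<and> f (n - 1) (b (n - 1)) = q
       \<and> (\<forall>j. j + 1 < n \<longrightarrow> f j (b j) = f (j + 1) (a (j + 1)))}"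

definition complex_geodesic :: "(complex \<times> complex) set \<Rightarrow> (complex \<Rightarrow> complex \<times> complex) \<Rightarrow> bool" where
  "complex_geodesic D f \<longleftrightarrow> hol_disc_map D f \<and>
     (\<forall>z\<in>unit_disc. \<forall>z'\<in>unit_disc. kobayashi_dist D (f z) (f z') = poincare_dist z z')"

definition inf_complex_geodesic :: "(complex \<times> complex) set \<Rightarrow> (complex \<Rightarrow> complex \<times> complex) \<Rightarrow> bool" where
  "inf_complex_geodesic D f \<longleftrightarrow> hol_disc_map D f \<and>
     (\<forall>z\<in>unit_disc. \<forall>v0. kobayashi_metric D (f z)
          (v0 * fst (deriv2 f z), v0 * snd (deriv2 f z)) = poincare_metric z v0)"

end

theory Submission
  imports Defs "HOL-Complex_Analysis.Complex_Analysis"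
begin

text \<open>Along the disc f the defining function factors as -(1 - |z|^2) times a second factor that the
  smallness of a1 and a2 keeps above 1 - 1/8 - 1/32, so f maps the unit disc into \<Omega>.
  The first coordinate projection maps \<Omega> holomorphically into the unit disc and is a rotation
  on the image of f. Holomorphic maps into the disc do not increase the Poincar\'e distance and
  metric (Schwarz-Pick), so this projection bounds the Kobayashi distance and metric of \<Omega> from
  below along f by those of the disc, while f itself bounds them from above.\<close>

section \<open>The Poincar\'e distance of the unit disc\<close>

lemma artanh_real_mono:
  fixes x y :: real
  assumes "0 \<le> x" "x \<le> y" "y < 1"
  shows "artanh x \<le> artanh y"
proof -
  have "(1+x)/(1-x) \<le> (1+y)/(1-y)"
    using assms by (simp add: divide_simps) (simp add: algebra_simps)
  moreover have "0 < (1+x)/(1-x)" using assms by simp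
  ultimately show ?thesis unfolding artanh_def by simp
qed

lemma artanh_real_add:
  fixes s t :: real
  assumes "0 \<le> s" "s < 1" "0 \<le> t" "t < 1"
  shows "artanh ((s+t)/(1+s*t)) = artanh s + artanh t"
proof -
  have p: "0 < 1 + s*t" using assms by (simp add: add_pos_nonneg)
  have plus: "1 + (s+t)/(1+s*t) = (1+s)*(1+t)/(1+s*t)" using p by (simp add: field_simps)
  have minus: "1 - (s+t)/(1+s*t) = (1-s)*(1-t)/(1+s*t)" using p by (simp add: field_simps)
  have "(1 + (s+t)/(1+s*t)) / (1 - (s+t)/(1+s*t)) = ((1+s)/(1-s)) * ((1+t)/(1-t))"
    unfolding plus minus using p by simp
  moreover have "ln (((1+s)/(1-s)) * ((1+t)/(1-t))) = ln ((1+s)/(1-s)) + ln ((1+t)/(1-t))"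
    using assms by (intro ln_mult_pos) auto
  ultimately show ?thesis unfolding artanh_def by (simp add: add_divide_distrib)
qed

lemma one_minus_cnj_mult_self: "1 - cnj z * z = complex_of_real (1 - (cmod z)^2)"
  using complex_norm_square[of z] by (simp add: mult.commute)

lemma poincare_dist_Moebius: "poincare_dist a b = artanh (cmod (Moebius_function 0 a b))"
  unfolding poincare_dist_def Moebius_function_def
  by (simp add: norm_divide norm_minus_commute)

lemma Moebius_function_in_ball:
  "a \<in> ball 0 1 \<Longrightarrow> b \<in> ball 0 1 \<Longrightarrow> Moebius_function t a b \<in> ball 0 1"
  using Moebius_function_norm_lt_1 by auto

lemma Moebius_function_inverse:
  "c \<in> ball 0 1 \<Longrightarrow> a \<in> ball 0 1 \<Longrightarrow> Moebius_function 0 (-c) (Moebius_function 0 c a) = a"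
  using Moebius_function_compose[of "-c" c a] by auto

lemma Schwarz_Pick:
  assumes h: "h holomorphic_on ball 0 1" and h_ball: "h ` ball 0 1 \<subseteq> ball 0 1"
    and a: "a \<in> ball 0 1" and b: "b \<in> ball 0 1"
  shows "cmod (Moebius_function 0 (h a) (h b)) \<le> cmod (Moebius_function 0 a b)"
proof -
  have ha: "h a \<in> ball 0 1" using h_ball a by blast
  have a': "cmod (-a) < 1" using a by simp
  define \<psi> where "\<psi> = h \<circ> Moebius_function 0 (-a)"
  define \<phi> where "\<phi> = Moebius_function 0 (h a) \<circ> \<psi>"
  have \<psi>_ball: "\<psi> ` ball 0 1 \<subseteq> ball 0 1"
    unfolding \<psi>_def using h_ball a' by (auto simp: Moebius_function_norm_lt_1)
  have "\<psi> holomorphic_on ball 0 1"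
    unfolding \<psi>_def using a' by (intro holomorphic_on_compose_gen[OF _ h]
        Moebius_function_holomorphic) (auto simp: Moebius_function_norm_lt_1)
  then have "\<phi> holomorphic_on ball 0 1"
    unfolding \<phi>_def using \<psi>_ball ha
    by (intro holomorphic_on_compose_gen[OF _ Moebius_function_holomorphic]) auto
  moreover have "\<phi> 0 = 0"
    unfolding \<phi>_def \<psi>_def by (simp add: Moebius_function_of_zero Moebius_function_eq_zero)
  moreover have "cmod (\<phi> w) < 1" if "cmod w < 1" for w
  proof -
    have "\<psi> w \<in> ball 0 1" using \<psi>_ball that by (simp add: image_subset_iff)
    then show ?thesis unfolding \<phi>_def using ha by (simp add: Moebius_function_norm_lt_1)
  qed
  moreover have "\<phi> (Moebius_function 0 a b) = Moebius_function 0 (h a) (h b)"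
    unfolding \<phi>_def \<psi>_def using Moebius_function_inverse[OF a b] by simp
  ultimately show ?thesis
    using Schwarz_Lemma(1)[of \<phi> "Moebius_function 0 a b"] a b
    by (auto simp: Moebius_function_norm_lt_1)
qed

lemma poincare_dist_holomorphic_le:
  assumes "h holomorphic_on ball 0 1" "h ` ball 0 1 \<subseteq> ball 0 1" "a \<in> ball 0 1" "b \<in> ball 0 1"
  shows "poincare_dist (h a) (h b) \<le> poincare_dist a b"
  unfolding poincare_dist_Moebius
  using Schwarz_Pick[OF assms] Moebius_function_in_ball[of a b 0] assms(3,4)
  by (intro artanh_real_mono) auto

lemma poincare_dist_Moebius_invariant:
  assumes c: "c \<in> ball 0 1" and a: "a \<in> ball 0 1" and b: "b \<in> ball 0 1"
  shows "poincare_dist (Moebius_function 0 c a) (Moebius_function 0 c b) = poincare_dist a b"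
proof (rule antisym)
  have c': "cmod c < 1" "cmod (-c) < 1" using c by auto
  show "poincare_dist (Moebius_function 0 c a) (Moebius_function 0 c b) \<le> poincare_dist a b"
    using a b c Moebius_function_in_ball[OF c]
    by (intro poincare_dist_holomorphic_le Moebius_function_holomorphic c') auto
  have "poincare_dist (Moebius_function 0 (-c) (Moebius_function 0 c a))
          (Moebius_function 0 (-c) (Moebius_function 0 c b))
        \<le> poincare_dist (Moebius_function 0 c a) (Moebius_function 0 c b)"
    using a b c Moebius_function_in_ball[of "-c"] Moebius_function_in_ball[OF c]
    by (intro poincare_dist_holomorphic_le Moebius_function_holomorphic c') auto
  then show "poincare_dist a b \<le> poincare_dist (Moebius_function 0 c a) (Moebius_function 0 c b)"
    using Moebius_function_inverse[OF c a] Moebius_function_inverse[OF c b] by simp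
qed

text \<open>The identity |1 - conj(u) v|^2 - |u - v|^2 = (1 - |u|^2)(1 - |v|^2) together with
  |1 - conj(u) v| \<le> 1 + |u||v| gives the bound.\<close>
lemma norm_Moebius_function_le:
  assumes u: "cmod u < 1" and v: "cmod v < 1"
  shows "cmod (Moebius_function 0 u v) \<le> (cmod u + cmod v) / (1 + cmod u * cmod v)"
proof -
  define s t where "s = cmod u" and "t = cmod v"
  define D N where "D = (cmod (1 - cnj u * v))^2" and "N = (cmod (v - u))^2"
  have s: "0 \<le> s" "s < 1" and t: "0 \<le> t" "t < 1" using u v s_def t_def by auto
  have st: "0 < 1 + s*t" using s t by (simp add: add_pos_nonneg)
  have D_minus_N: "D - N = (1 - s^2) * (1 - t^2)"
    unfolding D_def N_def s_def t_def
    by (cases u; cases v; simp add: cmod_power2; simp add: power2_eq_square algebra_simps)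
  have "0 < (1 - s^2) * (1 - t^2)" using s t by (simp add: power_less_one_iff)
  then have D: "0 < D" using D_minus_N unfolding N_def by (smt (verit) zero_le_power2)
  have "cmod (1 - cnj u * v) \<le> 1 + s * t"
    using norm_triangle_ineq4[of 1 "cnj u * v"] by (simp add: norm_mult s_def t_def)
  then have "D \<le> (1 + s*t)^2" unfolding D_def by (simp add: power_mono)
  then have "(1 - s^2) * (1 - t^2) / (1 + s*t)^2 \<le> (1 - s^2) * (1 - t^2) / D"
    using D s t st by (intro divide_left_mono mult_pos_pos) (auto simp: power_le_one)
  moreover have "N / D = 1 - (1 - s^2) * (1 - t^2) / D"
    using D D_minus_N by (simp add: field_simps)
  moreover have "((s+t)/(1+s*t))^2 = 1 - (1 - s^2) * (1 - t^2) / (1 + s*t)^2"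
  proof -
    have "(s+t)^2 = (1 + s*t)^2 - (1 - s^2) * (1 - t^2)" by (simp add: power2_eq_square algebra_simps)
    then show ?thesis using st by (simp add: power_divide diff_divide_distrib)
  qed
  ultimately have "(sqrt N / sqrt D)^2 \<le> ((s+t)/(1+s*t))^2"
    using D unfolding N_def by (simp add: power_divide)
  then have "sqrt N / sqrt D \<le> (s+t)/(1+s*t)"
    by (rule power2_le_imp_le) (use s t st in auto)
  then show ?thesis
    unfolding D_def N_def s_def t_def Moebius_function_simple by (simp add: norm_divide)
qed

lemma poincare_dist_le_artanh_norm_add:
  assumes u: "cmod u < 1" and v: "cmod v < 1"
  shows "poincare_dist u v \<le> artanh (cmod u) + artanh (cmod v)"
proof -
  have "cmod u + cmod v < 1 + cmod u * cmod v"
    using mult_pos_pos[of "1 - cmod u" "1 - cmod v"] u v by (simp add: algebra_simps)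
  then have "(cmod u + cmod v) / (1 + cmod u * cmod v) < 1"
    by (simp add: divide_simps add_pos_nonneg)
  then have "poincare_dist u v \<le> artanh ((cmod u + cmod v) / (1 + cmod u * cmod v))"
    unfolding poincare_dist_Moebius
    by (intro artanh_real_mono norm_ge_zero order_trans[OF norm_Moebius_function_le[OF u v]]) auto
  also have "\<dots> = artanh (cmod u) + artanh (cmod v)"
    using u v by (intro artanh_real_add) auto
  finally show ?thesis .
qed

lemma poincare_dist_triangle:
  assumes a: "a \<in> ball 0 1" and b: "b \<in> ball 0 1" and c: "c \<in> ball 0 1"
  shows "poincare_dist a c \<le> poincare_dist a b + poincare_dist b c"
proof -
  define u v where "u = Moebius_function 0 b a" and "v = Moebius_function 0 b c"
  have u: "cmod u < 1" and v: "cmod v < 1"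
    using a b c unfolding u_def v_def by (auto simp: Moebius_function_norm_lt_1)
  have "poincare_dist a c = poincare_dist u v"
    using poincare_dist_Moebius_invariant[OF b a c] u_def v_def by simp
  moreover have "poincare_dist a b = artanh (cmod u)"
    using poincare_dist_Moebius_invariant[OF b a b] u_def
    by (simp add: Moebius_function_eq_zero poincare_dist_def)
  moreover have "poincare_dist b c = artanh (cmod v)"
    using poincare_dist_Moebius_invariant[OF b b c] v_def
    by (simp add: Moebius_function_eq_zero poincare_dist_def)
  ultimately show ?thesis using poincare_dist_le_artanh_norm_add[OF u v] by simp
qed

lemma poincare_dist_mult_unimodular:
  assumes "cmod e = 1"
  shows "poincare_dist (e * a) (e * b) = poincare_dist a b"
proof -
  have "cnj e * e = 1" using assms one_minus_cnj_mult_self[of e] by simp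
  then have cnj_eq: "cnj (e * a) * (e * b) = cnj a * b"
    by (metis (no_types, lifting) complex_cnj_mult mult.assoc mult.left_commute mult_1)
  have norm_eq: "cmod (e * a - e * b) = cmod (a - b)"
    using assms by (simp add: norm_mult right_diff_distrib[symmetric])
  show ?thesis unfolding poincare_dist_def cnj_eq norm_eq ..
qed

lemma poincare_dist_chain_le:
  fixes n :: nat
  assumes "1 \<le> n"
    and "\<forall>j<n. h j holomorphic_on ball 0 1 \<and> h j ` ball 0 1 \<subseteq> ball 0 1
                \<and> a j \<in> ball 0 1 \<and> b j \<in> ball 0 1"
    and "\<forall>j. j + 1 < n \<longrightarrow> h j (b j) = h (j + 1) (a (j + 1))"
  shows "poincare_dist (h 0 (a 0)) (h (n - 1) (b (n - 1))) \<le> (\<Sum>j<n. poincare_dist (a j) (b j))"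
  using assms
proof (induction n rule: nat_induct_at_least)
  case base
  then show ?case using poincare_dist_holomorphic_le[of "h 0" "a 0" "b 0"] by simp
next
  case (Suc n)
  have maps: "h j holomorphic_on ball 0 1" "h j \<zeta> \<in> ball 0 1"
    if "j < Suc n" "\<zeta> \<in> ball 0 1" for j \<zeta>
    using Suc.prems(1) that by blast+
  have ends: "a j \<in> ball 0 1" "b j \<in> ball 0 1" if "j < Suc n" for j
    using Suc.prems(1) that by blast+
  have joint: "h (n - 1) (b (n - 1)) = h n (a n)"
    using spec[OF Suc.prems(2), of "n - 1"] Suc.hyps by simp
  have IH: "poincare_dist (h 0 (a 0)) (h (n - 1) (b (n - 1))) \<le> (\<Sum>j<n. poincare_dist (a j) (b j))"
    using Suc.prems by (intro Suc.IH) auto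
  have "poincare_dist (h 0 (a 0)) (h n (b n))
      \<le> poincare_dist (h 0 (a 0)) (h n (a n)) + poincare_dist (h n (a n)) (h n (b n))"
    using maps ends by (intro poincare_dist_triangle) auto
  also have "\<dots> \<le> (\<Sum>j<n. poincare_dist (a j) (b j)) + poincare_dist (a n) (b n)"
    using IH joint Suc.prems(1) ends[of n] by (intro add_mono poincare_dist_holomorphic_le) auto
  finally show ?case by simp
qed

lemma norm_deriv_at_0_le:
  assumes h: "h holomorphic_on ball 0 1" and h_ball: "h ` ball 0 1 \<subseteq> ball 0 1"
  shows "cmod (deriv h 0) \<le> 1 - (cmod (h 0))^2"
proof -
  define c where "c = h 0"
  define k where "k = 1 - cnj c * c"
  have c: "cmod c < 1" using h_ball unfolding c_def by (simp add: image_subset_iff)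
  have pos: "0 < 1 - (cmod c)^2" using c by (simp add: power_less_one_iff)
  have k: "k = complex_of_real (1 - (cmod c)^2)" unfolding k_def by (rule one_minus_cnj_mult_self)
  have "k \<noteq> 0" unfolding k of_real_eq_0_iff using pos by linarith
  define \<phi> where "\<phi> = Moebius_function 0 c \<circ> h"
  have hol: "\<phi> holomorphic_on ball 0 1"
    unfolding \<phi>_def by (rule holomorphic_on_compose_gen[OF h Moebius_function_holomorphic[OF c] h_ball])
  have zero: "\<phi> 0 = 0" unfolding \<phi>_def c_def by (simp add: Moebius_function_eq_zero)
  have bound: "cmod (\<phi> z) < 1" if "cmod z < 1" for z
    unfolding \<phi>_def using that c h_ball by (auto simp: Moebius_function_norm_lt_1 image_subset_iff)
  have norm_d\<phi>: "cmod (deriv \<phi> 0) \<le> 1"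
    using Schwarz_Lemma(2)[OF hol zero bound, of 0] by simp
  have "(Moebius_function 0 c has_field_derivative 1 / k) (at (h 0))"
    unfolding Moebius_function_simple c_def[symmetric] k_def using \<open>k \<noteq> 0\<close>[unfolded k_def]
    by (auto intro!: derivative_eq_intros)
  then have "(\<phi> has_field_derivative 1 / k * deriv h 0) (at 0)"
    unfolding \<phi>_def o_def by (rule DERIV_chain2) (rule holomorphic_derivI[OF h]; simp)
  then have "deriv h 0 = k * deriv \<phi> 0"
    using \<open>k \<noteq> 0\<close> by (simp add: DERIV_imp_deriv)
  then have "cmod (deriv h 0) = cmod k * cmod (deriv \<phi> 0)" by (simp add: norm_mult)
  also have "\<dots> \<le> cmod k" using norm_d\<phi> by (simp add: mult_left_le)
  also have "cmod k = 1 - (cmod c)^2" unfolding k norm_of_real using pos by simp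
  finally show ?thesis unfolding c_def .
qed

section \<open>The domain \<Omega>\<close>

text \<open>For |z| \<ge> 1 the defining function is at least (|z|^2 - 1)(1 - |w|^2 (1 + |z|^2)), which is
  nonnegative because |w| \<le> 1/4 and |z| \<le> 2 on \<Omega>.\<close>
lemma fst_Omega_subset_unit_disc:
  assumes eps: "0 \<le> eps" "eps < 1"
  shows "fst ` Omega eps \<subseteq> unit_disc"
proof (rule image_subsetI, rule ccontr)
  fix p assume p: "p \<in> Omega eps" and "fst p \<notin> unit_disc"
  define r s where "r = cmod (fst p)" and "s = cmod (snd p)"
  have r: "1 \<le> r" using \<open>fst p \<notin> unit_disc\<close> unfolding r_def unit_disc_def by simp
  have rho: "r^2 + s^2 - Re (cnj (fst p)^4 * snd p^2) - 1 < 0" and r2: "r < 1 + eps"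
    and s: "s < 1 / (4 * (1 + eps)^3)"
    using p unfolding Omega_def rho_fun_def r_def s_def by (auto simp: Let_def)
  have "1 / (4 * (1 + eps)^3) \<le> 1/4" using eps by (simp add: one_le_power)
  then have "s^2 \<le> (1/4)^2" using s unfolding s_def by (intro power_mono) auto
  moreover have "r^2 \<le> 2^2" using r r2 eps by (intro power_mono) auto
  ultimately have "s^2 * (1 + r^2) \<le> (1/4)^2 * 5" by (intro mult_mono) auto
  then have "s^2 * (1 + r^2) \<le> 1" by (simp add: power2_eq_square)
  then have "0 \<le> (r^2 - 1) * (1 - s^2 * (1 + r^2))"
    using r by (intro mult_nonneg_nonneg) (auto simp: one_le_power)
  also have "\<dots> = r^2 + s^2 - r^4 * s^2 - 1"
    by (simp add: algebra_simps power2_eq_square power4_eq_xxxx)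
  also have "r^4 * s^2 = cmod (cnj (fst p)^4 * snd p^2)"
    unfolding r_def s_def by (simp add: norm_mult norm_power)
  also have "Re (cnj (fst p)^4 * snd p^2) \<le> \<dots>" by (rule complex_Re_le_cmod)
  ultimately show False using rho by linarith
qed

text \<open>With w = conj(z) q one has conj(z)^4 z^2 q^2 = t^2 w^2 and Im w = (t - 1) Im (conj(a) z), the
  terms conj(z) a and t conj(a) z of w being conjugate up to the factor t.\<close>
lemma rho_fun_graph:
  fixes a z e :: complex and d :: real
  assumes e: "cmod e = 1"
  defines "q \<equiv> a + complex_of_real d * z + cnj a * z^2" and "t \<equiv> (cmod z)^2"
  shows "rho_fun (e * z, e^2 * z * q)
    = -(1 - t) * (1 - t * (1 + t) * (cmod q)^2 - 2 * t^2 * (1 - t) * (Im (cnj a * z))^2)"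
proof -
  define w where "w = cnj z * q"
  have cnj_e: "cnj e * e = 1" using e one_minus_cnj_mult_self[of e] by simp
  have cnj_z: "cnj z * z = complex_of_real t" using one_minus_cnj_mult_self[of z] unfolding t_def by simp
  have "cnj (e * z)^4 * (e^2 * z * q)^2 = (cnj e * e)^4 * (cnj z * z)^2 * w^2"
    unfolding w_def by (simp add: algebra_simps power_mult_distrib eval_nat_numeral)
  then have quartic: "cnj (e * z)^4 * (e^2 * z * q)^2 = complex_of_real (t^2) * w^2"
    unfolding cnj_e cnj_z by simp
  have "w = cnj z * a + complex_of_real d * (cnj z * z) + (cnj z * z) * (cnj a * z)"
    unfolding w_def q_def by (simp add: algebra_simps power2_eq_square)
  then have "w = cnj (cnj a * z) + complex_of_real (d * t) + complex_of_real t * (cnj a * z)"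
    unfolding cnj_z by simp
  then have Im_w: "Im w = -(1 - t) * Im (cnj a * z)" by (simp add: algebra_simps)
  have "(cmod w)^2 = t * (cmod q)^2" unfolding w_def t_def by (simp add: norm_mult power_mult_distrib)
  moreover have "Re (w^2) = (Re w)^2 - (Im w)^2" by (simp add: power2_eq_square)
  ultimately have Re_w2: "Re (w^2) = t * (cmod q)^2 - 2 * (Im w)^2"
    using cmod_power2[of w] by linarith
  have "rho_fun (e * z, e^2 * z * q) = t + t * (cmod q)^2 - t^2 * Re (w^2) - 1"
    using e unfolding rho_fun_def Let_def fst_conv snd_conv quartic t_def
    by (simp add: norm_mult norm_power power_mult_distrib)
  then show ?thesis unfolding Re_w2 Im_w by (simp add: algebra_simps power2_eq_square)
qed

lemma graph_in_Omega:
  fixes a z e :: complex and d eps :: real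
  assumes e: "cmod e = 1" and eps: "0 \<le> eps"
    and small: "2 * cmod a + \<bar>d\<bar> < 1 / (4 * (1 + eps)^3)" and z: "cmod z < 1"
  shows "(e * z, e^2 * z * (a + complex_of_real d * z + cnj a * z^2)) \<in> Omega eps"
proof -
  define q t where "q = a + complex_of_real d * z + cnj a * z^2" and "t = (cmod z)^2"
  have t: "0 \<le> t" "t < 1" unfolding t_def using z by (auto simp: power_less_one_iff)
  have quarter: "1 / (4 * (1 + eps)^3) \<le> 1/4" using eps by (simp add: one_le_power)
  have "cmod q \<le> cmod a + \<bar>d\<bar> * cmod z + cmod a * (cmod z)^2"
    unfolding q_def using norm_triangle_ineq[of "a + complex_of_real d * z" "cnj a * z^2"]
      norm_triangle_ineq[of a "complex_of_real d * z"] by (simp add: norm_mult norm_power)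
  also have "\<dots> \<le> 2 * cmod a + \<bar>d\<bar>"
    using z mult_left_le[of "cmod z" "\<bar>d\<bar>"] mult_left_le[of "(cmod z)^2" "cmod a"]
    by (simp add: power_le_one)
  finally have q: "cmod q < 1 / (4 * (1 + eps)^3)" using small by linarith
  then have "(cmod q)^2 \<le> (1/4)^2" using quarter by (intro power_mono) auto
  moreover have "t * (1 + t) \<le> 2" using mult_mono[of t 1 "1 + t" 2] t by simp
  ultimately have q2: "t * (1 + t) * (cmod q)^2 \<le> 2 * (1/4)^2" using t by (intro mult_mono) auto
  have "cmod (cnj a * z) \<le> cmod a" using z mult_left_le[of "cmod z" "cmod a"] by (simp add: norm_mult)
  then have "\<bar>Im (cnj a * z)\<bar> \<le> 1/8"
    using abs_Im_le_cmod[of "cnj a * z"] small quarter abs_ge_zero[of d] by linarith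
  then have "(Im (cnj a * z))^2 \<le> (1/8)^2"
    using power_mono[OF _ abs_ge_zero, of "Im (cnj a * z)" "1/8" 2] by simp
  moreover have "t^2 * (1 - t) \<le> 1" using t by (intro mult_le_one) (auto simp: power_le_one)
  ultimately have "t^2 * (1 - t) * (Im (cnj a * z))^2 \<le> 1 * (1/8)^2" using t by (intro mult_mono) auto
  moreover have "(2::real) * (1/4)^2 + 2 * (1/8)^2 < 1" by (simp add: power2_eq_square)
  ultimately have "0 < 1 - t * (1 + t) * (cmod q)^2 - 2 * t^2 * (1 - t) * (Im (cnj a * z))^2"
    using q2 by linarith
  then have "rho_fun (e * z, e^2 * z * q) < 0"
    unfolding rho_fun_graph[OF e, of z a d, folded q_def t_def] using t by (intro mult_neg_pos) auto
  moreover have "cmod (e * z) < 1 + eps" using e z eps by (simp add: norm_mult)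
  moreover have "cmod (e^2 * z * q) < 1 / (4 * (1 + eps)^3)"
    using e z q mult_left_le_one_le[of "cmod q" "cmod z"] by (simp add: norm_mult norm_power)
  ultimately show ?thesis unfolding Omega_def q_def by simp
qed


section \<open>Discs whose first coordinate is a rotation\<close>

text \<open>If the first coordinate maps D into the unit disc, it contracts the Kobayashi distance of D
  to the Poincar\'e distance; so a disc in D whose first coordinate is a rotation is an isometry.\<close>
lemma kobayashi_dist_eq_if_fst_rotation:
  assumes f: "hol_disc_map D f" and D: "fst ` D \<subseteq> unit_disc"
    and e: "cmod e = 1" and fst_f: "\<And>\<zeta>. fst (f \<zeta>) = e * \<zeta>"
    and z: "z \<in> unit_disc" and z': "z' \<in> unit_disc"
  shows "kobayashi_dist D (f z) (f z') = poincare_dist z z'"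
  unfolding kobayashi_dist_def
proof (rule cInf_eq_minimum, goal_cases)
  case 1
  show ?case
    unfolding mem_Collect_eq
    by (rule exI[of _ 1], rule exI[of _ "\<lambda>_. z"], rule exI[of _ "\<lambda>_. z'"], rule exI[of _ "\<lambda>_. f"])
      (use f z z' in auto)
next
  case (2 x)
  then obtain n :: nat and a b F where x: "x = (\<Sum>j<n. poincare_dist (a j) (b j))" and "1 \<le> n"
    and chain: "\<forall>j<n. hol_disc_map D (F j) \<and> a j \<in> unit_disc \<and> b j \<in> unit_disc"
    and start: "F 0 (a 0) = f z" and stop: "F (n - 1) (b (n - 1)) = f z'"
    and joints: "\<forall>j. j + 1 < n \<longrightarrow> F j (b j) = F (j + 1) (a (j + 1))"
    by blast
  have "poincare_dist (fst (F 0 (a 0))) (fst (F (n - 1) (b (n - 1)))) \<le> x"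
    unfolding x
  proof (rule poincare_dist_chain_le[where h = "\<lambda>j \<zeta>. fst (F j \<zeta>)"])
    show "\<forall>j<n. (\<lambda>\<zeta>. fst (F j \<zeta>)) holomorphic_on ball 0 1 \<and> (\<lambda>\<zeta>. fst (F j \<zeta>)) ` ball 0 1 \<subseteq> ball 0 1
        \<and> a j \<in> ball 0 1 \<and> b j \<in> ball 0 1"
      using chain D unfolding hol_disc_map_def unit_disc_def by fastforce
  qed (use \<open>1 \<le> n\<close> joints in auto)
  then show ?case
    unfolding start stop fst_f poincare_dist_mult_unimodular[OF e] .
qed

lemma complex_geodesic_if_fst_rotation:
  assumes "hol_disc_map D f" "fst ` D \<subseteq> unit_disc" "cmod e = 1" "\<And>\<zeta>. fst (f \<zeta>) = e * \<zeta>"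
  shows "complex_geodesic D f"
  using assms(1) kobayashi_dist_eq_if_fst_rotation[OF assms] unfolding complex_geodesic_def by blast

lemma hol_disc_map_compose_Moebius:
  assumes f: "hol_disc_map D f" and c: "cmod c < 1"
  shows "hol_disc_map D (f \<circ> Moebius_function 0 c)"
proof -
  have M: "Moebius_function 0 c ` ball 0 1 \<subseteq> ball 0 1"
    using c by (auto simp: Moebius_function_norm_lt_1)
  show ?thesis
    using f M unfolding hol_disc_map_def unit_disc_def o_def
    by (auto intro!: holomorphic_on_compose_gen[OF Moebius_function_holomorphic[OF c],
          unfolded o_def])
qed

lemma deriv_compose_Moebius_at_0:
  assumes g: "g holomorphic_on ball 0 1" and z: "z \<in> ball 0 1"
  shows "deriv (\<lambda>t. g (Moebius_function 0 (-z) t)) 0 = deriv g z * (1 - cnj z * z)"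
proof -
  have "(Moebius_function 0 (-z) has_field_derivative 1 - cnj z * z) (at 0)"
    unfolding Moebius_function_simple by (auto intro!: derivative_eq_intros)
  moreover have "(g has_field_derivative deriv g z) (at (Moebius_function 0 (-z) 0))"
    using holomorphic_derivI[OF g _ z] by (simp add: Moebius_function_of_zero)
  ultimately show ?thesis by (intro DERIV_imp_deriv DERIV_chain2)
qed

lemma kobayashi_metric_eq_if_fst_rotation:
  assumes f: "hol_disc_map D f" and D: "fst ` D \<subseteq> unit_disc"
    and e: "cmod e = 1" and fst_f: "\<And>\<zeta>. fst (f \<zeta>) = e * \<zeta>"
    and z: "z \<in> unit_disc"
  shows "kobayashi_metric D (f z) (v * fst (deriv2 f z), v * snd (deriv2 f z)) = poincare_metric z v"
proof -
  define M where "M = Moebius_function 0 (-z)"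
  define k where "k = 1 - cnj z * z"
  have z': "cmod (-z) < 1" "z \<in> ball 0 1" using z unfolding unit_disc_def by auto
  have pos: "0 < 1 - (cmod z)^2" using z' by (simp add: power_less_one_iff)
  have k: "k = complex_of_real (1 - (cmod z)^2)" unfolding k_def by (rule one_minus_cnj_mult_self)
  have "k \<noteq> 0" unfolding k of_real_eq_0_iff using pos by linarith
  have "cmod k = 1 - (cmod z)^2" unfolding k norm_of_real using pos by simp
  have hol: "(\<lambda>t. fst (f t)) holomorphic_on ball 0 1" "(\<lambda>t. snd (f t)) holomorphic_on ball 0 1"
    using f unfolding hol_disc_map_def unit_disc_def by auto
  have "deriv2 (f \<circ> M) 0 = (k * fst (deriv2 f z), k * snd (deriv2 f z))"
    unfolding deriv2_def M_def k_def o_def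
    using deriv_compose_Moebius_at_0[OF hol(1) z'(2)] deriv_compose_Moebius_at_0[OF hol(2) z'(2)]
    by (simp add: mult.commute)
  moreover have "(f \<circ> M) 0 = f z" unfolding M_def by (simp add: Moebius_function_of_zero)
  moreover have "hol_disc_map D (f \<circ> M)" unfolding M_def by (rule hol_disc_map_compose_Moebius[OF f z'(1)])
  ultimately have witness: "cmod v / (1 - (cmod z)^2) \<in> {cmod \<alpha> | \<alpha> g. hol_disc_map D g \<and> g 0 = f z
      \<and> (\<alpha> * fst (deriv2 g 0), \<alpha> * snd (deriv2 g 0)) = (v * fst (deriv2 f z), v * snd (deriv2 f z))}"
    using \<open>k \<noteq> 0\<close> \<open>cmod k = 1 - (cmod z)^2\<close>
    by (intro CollectI exI[of _ "v / k"] exI[of _ "f \<circ> M"]) (auto simp: norm_divide)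
  have "fst (deriv2 f z) = e"
    unfolding deriv2_def fst_conv fst_f by (intro DERIV_imp_deriv) (auto intro!: derivative_eq_intros)
  show ?thesis unfolding kobayashi_metric_def poincare_metric_def
  proof (rule cInf_eq_minimum[OF witness], goal_cases)
    case (1 x)
    then obtain \<alpha> g where x: "x = cmod \<alpha>" and g: "hol_disc_map D g" and "g 0 = f z"
      and dg: "\<alpha> * deriv (\<lambda>t. fst (g t)) 0 = v * e"
      unfolding deriv2_def \<open>fst (deriv2 f z) = e\<close>[unfolded deriv2_def fst_conv] by auto
    have "cmod v = cmod \<alpha> * cmod (deriv (\<lambda>t. fst (g t)) 0)"
      using arg_cong[OF dg, of cmod] by (simp add: norm_mult e)
    also have "\<dots> \<le> cmod \<alpha> * (1 - (cmod (fst (g 0)))^2)"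
      using g D unfolding hol_disc_map_def unit_disc_def
      by (intro mult_left_mono norm_deriv_at_0_le) auto
    finally show ?case
      unfolding x \<open>g 0 = f z\<close> fst_f using e pos by (simp add: norm_mult divide_le_eq)
  qed
qed

lemma inf_complex_geodesic_if_fst_rotation:
  assumes "hol_disc_map D f" "fst ` D \<subseteq> unit_disc" "cmod e = 1" "\<And>\<zeta>. fst (f \<zeta>) = e * \<zeta>"
  shows "inf_complex_geodesic D f"
  using assms(1) kobayashi_metric_eq_if_fst_rotation[OF assms] unfolding inf_complex_geodesic_def by blast

theorem lemma2p2:
  fixes eps :: real and a1 :: complex and a2 :: real and \<theta> :: real
  assumes "0 < eps" and "eps < 1/100"
    and "0 \<le> \<theta>" and "\<theta> < 2 * pi"
    and "2 * cmod a1 + \<bar>a2\<bar> < 1 / (4 * (1 + eps)^3)"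
  defines "f \<equiv> (\<lambda>\<zeta>. (exp (\<i> * \<theta>) * \<zeta>,
                    exp (2 * \<i> * \<theta>) * \<zeta> * (a1 + complex_of_real a2 * \<zeta> + cnj a1 * \<zeta>^2)))"
  shows "f ` unit_disc \<subseteq> Omega eps \<and> complex_geodesic (Omega eps) f
         \<and> inf_complex_geodesic (Omega eps) f"
proof -
  define e where "e = exp (\<i> * complex_of_real \<theta>)"
  have e: "cmod e = 1" unfolding e_def by simp
  have f: "f = (\<lambda>\<zeta>. (e * \<zeta>, e^2 * \<zeta> * (a1 + complex_of_real a2 * \<zeta> + cnj a1 * \<zeta>^2)))"
    unfolding f_def e_def by (simp add: mult.assoc exp_double)
  have img: "f ` unit_disc \<subseteq> Omega eps"
    unfolding f unit_disc_def using graph_in_Omega[OF e] assms(1,5) by auto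
  have hol: "hol_disc_map (Omega eps) f"
    unfolding hol_disc_map_def using img unfolding f by (auto intro!: holomorphic_intros)
  have Omega: "fst ` Omega eps \<subseteq> unit_disc" using assms(1,2) by (intro fst_Omega_subset_unit_disc) auto
  have "fst (f \<zeta>) = e * \<zeta>" for \<zeta> unfolding f by simp
  then show ?thesis
    using img complex_geodesic_if_fst_rotation[OF hol Omega e] inf_complex_geodesic_if_fst_rotation[OF hol Omega e]
    by blast
qed

end
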